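(* Let $n\ge 2$ and let $\mathrm W=\mathfrak S_n\ltimes\mathfrak X$ be the extended affine Weyl group, where $\mathfrak X$ is the free abelian group of Laurent monomials $X_1^{a_1}\cdots X_n^{a_n}$ ($a_i\in\mathbb Z$) on which $\mathfrak S_n$ acts by $wX_iw^{-1}=X_{w(i)}$. For $J,K\subseteq \mathbb I=\{s_1,\dots,s_{n-1}\}$, the sets $$\Delta_{K,J}=\{dp \mid d\in D^{\mathbb I}_{K,J},\ p\in \overrightarrow{\mathfrak P}_{d^{-1}K\cap J}\},\qquad \nabla_{K,J}=\{dp \mid d\in D^{\mathbb I}_{K,J},\ p\in \overleftarrow{\mathfrak P}_{d^{-1}K\cap J}\}$$ are each a complete set of pairwise inequivalent representatives of the double cosets $\mathrm W_K\backslash \mathrm W/\mathrm W_J$.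
   Context: $s_i$ denotes the simple transposition $(i,i+1)\in\mathfrak S_n$. For $L\subseteq\mathbb I$, $\mathrm W_L$ is the (finite) parabolic subgroup of $\mathfrak S_n\subseteq\mathrm W$ generated by $L$. $D^{\mathbb I}_{K,J}$ denotes the set of minimal-length (Coxeter length in $\mathfrak S_n$) representatives of the double cosets $\mathrm W_K\backslash\mathfrak S_n/\mathrm W_J$. For $d\in D^{\mathbb I}_{K,J}$, $d^{-1}K\cap J=\{s\in J\mid dsd^{-1}\in K\}$. For $L\subseteq\mathbb I$, a monomial $X_1^{a_1}\cdots X_n^{a_n}$ is $L$-dominant if $a_i\ge a_j$ whenever $i\le j$ lie in the same orbit of $\mathrm W_L$ on $\{1,\dots,n\}$, and $L$-antidominant if $a_i\le a_j$ for all such $i\le j$; $\overrightarrow{\mathfrak P}_L$ and $\overleftarrow{\mathfrak P}_L$ denote the sets of $L$-dominant, respectively $L$-antidominant, monomials. *)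

theory Defs
  imports "HOL-Combinatorics.Combinatorics"
begin

(* Indices 1..n.  An element  w X^a  of W = S_n \<ltimes> X is encoded as the pair (w, a),
   w a permutation of {1..n}, a an integer exponent vector supported on {1..n}. *)

definition expvecs :: "nat \<Rightarrow> (nat \<Rightarrow> int) set" where
  "expvecs n = {a. \<forall>i. i \<notin> {1..n} \<longrightarrow> a i = 0}"

definition Wext :: "nat \<Rightarrow> ((nat \<Rightarrow> nat) \<times> (nat \<Rightarrow> int)) set" where
  "Wext n = {(w, a). w permutes {1..n} \<and> a \<in> expvecs n}"

(* (w X^a)(v X^b) = w v (v^{-1} X^a v) X^b, and v^{-1} X_i v = X_{v^{-1}(i)} *)
definition Wmult :: "((nat \<Rightarrow> nat) \<times> (nat \<Rightarrow> int)) \<Rightarrow> ((nat \<Rightarrow> nat) \<times> (nat \<Rightarrow> int))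
    \<Rightarrow> ((nat \<Rightarrow> nat) \<times> (nat \<Rightarrow> int))" where
  "Wmult x y = (fst x \<circ> fst y, (\<lambda>j. snd x (fst y j) + snd y j))"

definition simple :: "nat \<Rightarrow> nat \<Rightarrow> nat" where
  "simple i = transpose i (i + 1)"

inductive_set parabolic :: "nat set \<Rightarrow> (nat \<Rightarrow> nat) set" for L where
  id: "id \<in> parabolic L"
| step: "i \<in> L \<Longrightarrow> w \<in> parabolic L \<Longrightarrow> simple i \<circ> w \<in> parabolic L"

definition word_prod :: "nat list \<Rightarrow> nat \<Rightarrow> nat" where
  "word_prod is = foldr (\<lambda>i f. simple i \<circ> f) is id"

definition cox_length :: "nat \<Rightarrow> (nat \<Rightarrow> nat) \<Rightarrow> nat" where
  "cox_length n w = (LEAST k. \<exists>is. length is = k \<and> set is \<subseteq> {1..<n} \<and> word_prod is = w)"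

definition minreps :: "nat \<Rightarrow> nat set \<Rightarrow> nat set \<Rightarrow> (nat \<Rightarrow> nat) set" where
  "minreps n K J = {d. d permutes {1..n} \<and>
     (\<forall>u\<in>parabolic K. \<forall>v\<in>parabolic J. cox_length n d \<le> cox_length n (u \<circ> d \<circ> v))}"

(* d^{-1} K \<inter> J = {s \<in> J | d s d^{-1} \<in> K}, as a set of indices *)
definition conj_inter :: "(nat \<Rightarrow> nat) \<Rightarrow> nat set \<Rightarrow> nat set \<Rightarrow> nat set" where
  "conj_inter d K J = {j \<in> J. \<exists>k\<in>K. d \<circ> simple j \<circ> inv d = simple k}"

definition same_orbit :: "nat set \<Rightarrow> nat \<Rightarrow> nat \<Rightarrow> bool" where
  "same_orbit L i j \<longleftrightarrow> (\<exists>u\<in>parabolic L. u i = j)"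

definition dominant :: "nat \<Rightarrow> nat set \<Rightarrow> (nat \<Rightarrow> int) set" where
  "dominant n L = {a \<in> expvecs n. \<forall>i\<in>{1..n}. \<forall>j\<in>{1..n}.
      i \<le> j \<and> same_orbit L i j \<longrightarrow> a i \<ge> a j}"

definition antidominant :: "nat \<Rightarrow> nat set \<Rightarrow> (nat \<Rightarrow> int) set" where
  "antidominant n L = {a \<in> expvecs n. \<forall>i\<in>{1..n}. \<forall>j\<in>{1..n}.
      i \<le> j \<and> same_orbit L i j \<longrightarrow> a i \<le> a j}"

definition Delta :: "nat \<Rightarrow> nat set \<Rightarrow> nat set \<Rightarrow> ((nat \<Rightarrow> nat) \<times> (nat \<Rightarrow> int)) set" where
  "Delta n K J = {Wmult (d, \<lambda>_. 0) (id, p) | d p. d \<in> minreps n K J \<and> p \<in> dominant n (conj_inter d K J)}"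

definition Nabla :: "nat \<Rightarrow> nat set \<Rightarrow> nat set \<Rightarrow> ((nat \<Rightarrow> nat) \<times> (nat \<Rightarrow> int)) set" where
  "Nabla n K J = {Wmult (d, \<lambda>_. 0) (id, p) | d p. d \<in> minreps n K J \<and> p \<in> antidominant n (conj_inter d K J)}"

definition dcoset_equiv :: "nat set \<Rightarrow> nat set \<Rightarrow> ((nat \<Rightarrow> nat) \<times> (nat \<Rightarrow> int))
    \<Rightarrow> ((nat \<Rightarrow> nat) \<times> (nat \<Rightarrow> int)) \<Rightarrow> bool" where
  "dcoset_equiv K J x y \<longleftrightarrow>
     (\<exists>u\<in>parabolic K. \<exists>v\<in>parabolic J. y = Wmult (Wmult (u, \<lambda>_. 0) x) (v, \<lambda>_. 0))"

definition complete_reps :: "nat \<Rightarrow> nat set \<Rightarrow> nat set \<Rightarrow> ((nat \<Rightarrow> nat) \<times> (nat \<Rightarrow> int)) set \<Rightarrow> bool" where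
  "complete_reps n K J R \<longleftrightarrow> R \<subseteq> Wext n \<and>
     (\<forall>x\<in>Wext n. \<exists>r\<in>R. dcoset_equiv K J x r) \<and>
     (\<forall>r\<in>R. \<forall>r'\<in>R. dcoset_equiv K J r r' \<longrightarrow> r = r')"

end

theory Submission
  imports Defs
begin

(* An element (w, a) of W runs through its double coset W_K (w, a) W_J as (u w v, a \<circ> v) with
   u \<in> W_K, v \<in> W_J. Taking u w v of minimal length gives a permutation d \<in> D_{K,J}; it is
   characterised by having no left descents in K and no right descents in J, and a counting argument
   within blocks shows that it does not depend on the choice of u, v. What remains is the action of
   the pairs (u, v) with u d v = d, whose components v permute each block of d^-1 K \<inter> J. Within such
   blocks the exponent vector can be sorted (by minimising \<Sum> i a_i) and the sorted vector is unique,
   giving the dominant representative; negating all exponents turns dominant into antidominant. *)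

section \<open>Blocks of consecutive indices\<close>

definition same_block :: "nat set \<Rightarrow> nat \<Rightarrow> nat \<Rightarrow> bool" where
  "same_block L i j \<longleftrightarrow> {min i j..<max i j} \<subseteq> L"

lemma same_block_refl [simp]: "same_block L i i"
  by (simp add: same_block_def)

lemma same_block_sym: "same_block L i j \<Longrightarrow> same_block L j i"
  by (simp add: same_block_def min.commute max.commute)

lemma same_block_trans:
  assumes "same_block L i j" "same_block L j k"
  shows "same_block L i k"
proof -
  have "{min i k..<max i k} \<subseteq> {min i j..<max i j} \<union> {min j k..<max j k}"
    by (auto simp: min_def max_def)
  then show ?thesis using assms by (auto simp: same_block_def)
qed

lemma same_block_between:
  "same_block L a b \<Longrightarrow> min a b \<le> c \<Longrightarrow> c \<le> max a b \<Longrightarrow> same_block L a c"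
  unfolding same_block_def by (auto simp: min_def max_def split: if_splits)

lemma same_block_Suc_iff:
  "i \<le> j \<Longrightarrow> same_block L i (Suc j) \<longleftrightarrow> same_block L i j \<and> j \<in> L"
  unfolding same_block_def by (auto simp: min_def max_def less_Suc_eq)

lemma less_if_not_same_block:
  assumes "\<not> same_block L z z'" "z < z'" "same_block L z w" "same_block L z' w'"
  shows "w < w'"
proof -
  have "\<not> {z..<z'} \<subseteq> L" using assms(1,2) by (simp add: same_block_def)
  then obtain k where "k \<in> {z..<z'}" "k \<notin> L" by blast
  then have k: "z \<le> k" "k < z'" "k \<notin> L" by auto
  have "w \<le> k" "k < w'"
    using assms(3,4) k by (auto simp: same_block_def min_def max_def subset_iff split: if_splits)
  then show ?thesis by simp
qed

lemma less_on_same_block: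
  fixes f :: "nat \<Rightarrow> 'a::linorder"
  assumes "\<forall>k\<in>L. f k < f (Suc k)"
  shows "i < j \<Longrightarrow> same_block L i j \<Longrightarrow> f i < f j"
proof (induction j)
  case (Suc j)
  then have "same_block L i j" "j \<in> L" using same_block_Suc_iff by auto
  then show ?case using Suc assms by (metis less_Suc_eq order.strict_trans)
qed simp

lemma le_on_same_block:
  fixes f :: "nat \<Rightarrow> 'a::linorder"
  assumes "\<forall>k\<in>L. f (Suc k) \<le> f k"
  shows "i \<le> j \<Longrightarrow> same_block L i j \<Longrightarrow> f j \<le> f i"
proof (induction j)
  case (Suc j)
  show ?case
  proof (cases "i = Suc j")
    case False
    then have "i \<le> j" "same_block L i j" "j \<in> L" using Suc same_block_Suc_iff by auto
    then show ?thesis using Suc assms by (metis order.trans)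
  qed simp
qed simp

section \<open>Parabolic subgroups of the symmetric group\<close>

lemma simple_bij [simp]: "bij (simple i)"
  by (simp add: simple_def)

lemma simple_comp_simple [simp]: "simple i \<circ> simple i = id"
  by (simp add: simple_def)

lemma inv_simple [simp]: "inv (simple i) = simple i"
  by (simp add: simple_def)

lemma simple_permutes: "i \<in> {1..<n} \<Longrightarrow> simple i permutes {1..n}"
  unfolding simple_def by (rule permutes_swap_id) auto

lemma simple_in_parabolic: "i \<in> L \<Longrightarrow> simple i \<in> parabolic L"
  using parabolic.step[OF _ parabolic.id] by (metis comp_id)

lemma parabolic_bij: "u \<in> parabolic L \<Longrightarrow> bij u"
proof (induction rule: parabolic.induct)
  case (step i w)
  then show ?case using bij_comp[OF step(3) simple_bij] by blast
qed (rule bij_id)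

lemma parabolic_permutes: "u \<in> parabolic L \<Longrightarrow> L \<subseteq> {1..<n} \<Longrightarrow> u permutes {1..n}"
proof (induction rule: parabolic.induct)
  case (step i w)
  then show ?case using permutes_compose simple_permutes by blast
qed (rule permutes_id)

lemma parabolic_comp: "u \<in> parabolic L \<Longrightarrow> v \<in> parabolic L \<Longrightarrow> u \<circ> v \<in> parabolic L"
  by (induction rule: parabolic.induct) (auto simp: comp_assoc intro: parabolic.step)

lemma parabolic_inv: "u \<in> parabolic L \<Longrightarrow> inv u \<in> parabolic L"
proof (induction rule: parabolic.induct)
  case id
  show ?case by (metis inv_id parabolic.id)
next
  case (step i w)
  then have "inv (simple i \<circ> w) = inv w \<circ> simple i"
    using o_inv_distrib[OF simple_bij parabolic_bij] by simp
  then show ?case using step by (metis parabolic_comp simple_in_parabolic)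
qed

lemma parabolic_mono: "u \<in> parabolic L \<Longrightarrow> L \<subseteq> L' \<Longrightarrow> u \<in> parabolic L'"
  by (induction rule: parabolic.induct) (auto intro: parabolic.intros)

lemma same_block_parabolic: "u \<in> parabolic L \<Longrightarrow> same_block L x (u x)"
proof (induction rule: parabolic.induct)
  case (step i w)
  have "same_block L y (simple i y)" for y
    using step(1) by (auto simp: same_block_def simple_def transpose_def min_def max_def)
  then show ?case using step same_block_trans by fastforce
qed simp

lemma parabolic_moves_within_block:
  "i \<le> j \<Longrightarrow> same_block L i j \<Longrightarrow> \<exists>u\<in>parabolic L. u i = j"
proof (induction j)
  case 0
  then show ?case by (intro bexI[of _ id]) (auto intro: parabolic.id)
next
  case (Suc j)
  show ?case
  proof (cases "i = Suc j")
    case True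
    then show ?thesis by (intro bexI[of _ id]) (auto intro: parabolic.id)
  next
    case False
    then have "i \<le> j" "same_block L i j" "j \<in> L" using Suc same_block_Suc_iff by auto
    then obtain u where "u \<in> parabolic L" "u i = j" using Suc by auto
    then show ?thesis using \<open>j \<in> L\<close> parabolic.step[of j L u]
      by (intro bexI[of _ "simple j \<circ> u"]) (auto simp: simple_def)
  qed
qed

lemma same_orbit_iff_same_block: "same_orbit L i j \<longleftrightarrow> same_block L i j"
proof
  assume "same_orbit L i j"
  then show "same_block L i j" unfolding same_orbit_def using same_block_parabolic by blast
next
  assume ij: "same_block L i j"
  show "same_orbit L i j"
  proof (cases "i \<le> j")
    case True
    then show ?thesis using parabolic_moves_within_block ij unfolding same_orbit_def by blast
  next
    case False
    then obtain u where u: "u \<in> parabolic L" "u j = i"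
      using parabolic_moves_within_block[of j i L] same_block_sym[OF ij] by auto
    then have "inv u i = j" using parabolic_bij by (metis bij_inv_eq_iff)
    then show ?thesis using parabolic_inv[OF u(1)] unfolding same_orbit_def by blast
  qed
qed

lemma card_block_comp_permutation:
  assumes v: "v permutes {1..n}" and block: "\<forall>y. same_block J y (v y)"
  shows "card {y \<in> {1..n}. same_block J x y \<and> P (v y)} = card {y \<in> {1..n}. same_block J x y \<and> P y}"
proof -
  define B where "B = {y \<in> {1..n}. same_block J x y}"
  have "v ` B = B"
  proof (intro equalityI subsetI)
    fix z assume "z \<in> v ` B"
    then obtain y where "y \<in> B" "z = v y" by blast
    then show "z \<in> B"
      using block same_block_trans[of J x y "v y"] permutes_in_image[OF v, of y] by (simp add: B_def)
  next
    fix z assume z: "z \<in> B"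
    let ?y = "inv v z"
    have vy: "v ?y = z" using permutes_inverses[OF v] by simp
    then have "same_block J z ?y" using block same_block_sym by metis
    then have "same_block J x ?y" using z same_block_trans[of J x z ?y] by (simp add: B_def)
    moreover have "?y \<in> {1..n}" using permutes_in_image[OF v, of ?y] vy z by (simp add: B_def)
    ultimately have "?y \<in> B" by (simp add: B_def)
    then show "z \<in> v ` B" using vy[symmetric] by (rule rev_image_eqI)
  qed
  have "v ` {y \<in> B. P (v y)} = {z \<in> v ` B. P z}" by blast
  with \<open>v ` B = B\<close> have image: "v ` {y \<in> B. P (v y)} = {y \<in> B. P y}" by simp
  then have "card {y \<in> B. P (v y)} = card {y \<in> B. P y}"
    using card_image[OF permutes_inj_on[OF v]] by metis
  then show ?thesis by (simp add: B_def conj_assoc)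
qed

lemma card_block_double_coset_invariant:
  assumes u: "u \<in> parabolic K" and v: "v \<in> parabolic J" and J: "J \<subseteq> {1..<n}"
  shows "card {y \<in> {1..n}. same_block J x y \<and> same_block K z ((u \<circ> d \<circ> v) y)} =
         card {y \<in> {1..n}. same_block J x y \<and> same_block K z (d y)}"
proof -
  have "same_block K z (u (d (v y))) \<longleftrightarrow> same_block K z (d (v y))" for y
    using same_block_parabolic[OF u, of "d (v y)"] same_block_trans same_block_sym by metis
  moreover have "\<forall>y. same_block J y (v y)" using same_block_parabolic[OF v] by blast
  ultimately show ?thesis
    using card_block_comp_permutation[OF parabolic_permutes[OF v J], of J x "\<lambda>m. same_block K z (d m)"]
    by simp
qed

section \<open>Inversions and Coxeter length\<close>

definition inversions :: "nat \<Rightarrow> (nat \<Rightarrow> nat) \<Rightarrow> (nat \<times> nat) set" where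
  "inversions n w = {(a, b). a \<in> {1..n} \<and> b \<in> {1..n} \<and> a < b \<and> w b < w a}"

definition inversion_number :: "nat \<Rightarrow> (nat \<Rightarrow> nat) \<Rightarrow> nat" where
  "inversion_number n w = card (inversions n w)"

lemma finite_inversions [simp]: "finite (inversions n w)"
  by (rule finite_subset[of _ "{1..n} \<times> {1..n}"]) (auto simp: inversions_def)

lemma inversion_number_id [simp]: "inversion_number n id = 0"
proof -
  have "inversions n id = {}" by (auto simp: inversions_def)
  then show ?thesis by (simp add: inversion_number_def)
qed

lemma simple_less_simple_iff:
  "p \<noteq> q \<Longrightarrow> simple i q < simple i p \<longleftrightarrow> (if {p, q} = {i, Suc i} then p < q else q < p)"
  by (auto simp: simple_def transpose_def doubleton_eq_iff)

lemma inversions_eq_insert_simple_comp: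
  assumes w: "w permutes {1..n}" and i: "i \<in> {1..<n}" and desc: "inv w (Suc i) < inv w i"
  shows "inversions n w = insert (inv w (Suc i), inv w i) (inversions n (simple i \<circ> w))"
    and "(inv w (Suc i), inv w i) \<notin> inversions n (simple i \<circ> w)"
proof -
  let ?a = "inv w i" and ?b = "inv w (Suc i)"
  have ab: "?a \<in> {1..n}" "?b \<in> {1..n}" "w ?a = i" "w ?b = Suc i"
    using permutes_in_image[OF permutes_inv[OF w]] i permutes_inverses[OF w] by auto
  have "(x, y) \<in> inversions n (simple i \<circ> w) \<longleftrightarrow>
      (x, y) \<in> inversions n w \<and> (x, y) \<noteq> (?b, ?a)" for x y
  proof (cases "x < y")
    case True
    have "{w x, w y} = {i, Suc i} \<longleftrightarrow> {x, y} = {?a, ?b}"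
      using permutes_inverses[OF w] by (metis doubleton_eq_iff)
    then have swap: "{w x, w y} = {i, Suc i} \<longleftrightarrow> (x, y) = (?b, ?a)"
      using True desc by (auto simp: doubleton_eq_iff)
    have "w x \<noteq> w y" using permutes_inj[OF w] True by (metis inj_eq less_irrefl)
    then show ?thesis
      using ab True swap by (cases "(x, y) = (?b, ?a)") (auto simp: inversions_def simple_less_simple_iff)
  qed (auto simp: inversions_def)
  moreover have "(?b, ?a) \<in> inversions n w" using ab desc by (simp add: inversions_def)
  ultimately show "inversions n w = insert (?b, ?a) (inversions n (simple i \<circ> w))"
    and "(?b, ?a) \<notin> inversions n (simple i \<circ> w)"
    by auto
qed

lemma inversion_number_simple_comp_desc:
  assumes "w permutes {1..n}" "i \<in> {1..<n}" "inv w (Suc i) < inv w i"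
  shows "Suc (inversion_number n (simple i \<circ> w)) = inversion_number n w"
  using inversions_eq_insert_simple_comp[OF assms] by (simp add: inversion_number_def)

lemma inversion_number_simple_comp_asc:
  assumes w: "w permutes {1..n}" and i: "i \<in> {1..<n}" and asc: "inv w i < inv w (Suc i)"
  shows "inversion_number n (simple i \<circ> w) = Suc (inversion_number n w)"
proof -
  have "inv (simple i \<circ> w) = inv w \<circ> simple i"
    using o_inv_distrib[OF simple_bij permutes_bij[OF w]] by simp
  then have "inv (simple i \<circ> w) (Suc i) < inv (simple i \<circ> w) i"
    using asc by (simp add: simple_def)
  from inversion_number_simple_comp_desc[OF permutes_compose[OF w simple_permutes[OF i]] i this]
  show ?thesis by (simp add: comp_assoc[symmetric])
qed

lemma inversion_number_simple_comp_le:
  assumes w: "w permutes {1..n}" and i: "i \<in> {1..<n}"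
  shows "inversion_number n (simple i \<circ> w) \<le> Suc (inversion_number n w)"
proof -
  have "inv w i \<noteq> inv w (Suc i)" using permutes_inverses[OF w] by (metis n_not_Suc_n)
  then show ?thesis
    using inversion_number_simple_comp_asc[OF w i] inversion_number_simple_comp_desc[OF w i]
    by (metis le_SucI le_refl nat_neq_iff)
qed

lemma inversion_number_inv:
  assumes w: "w permutes {1..n}"
  shows "inversion_number n (inv w) = inversion_number n w"
proof -
  let ?f = "\<lambda>(x, y). (w y, w x)"
  have in_range: "w x \<in> {1..n} \<longleftrightarrow> x \<in> {1..n}" for x
    using permutes_in_image[OF w] by blast
  have iv: "inv w (w x) = x" "w (inv w x) = x" for x
    using permutes_inverses[OF w] by auto
  have "?f ` inversions n w = inversions n (inv w)"
  proof (intro equalityI subsetI)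
    fix z assume "z \<in> ?f ` inversions n w"
    then show "z \<in> inversions n (inv w)"
      using in_range iv by (auto simp: inversions_def)
  next
    fix z assume z: "z \<in> inversions n (inv w)"
    obtain p q where pq: "z = (p, q)" by (cases z)
    have "(inv w q, inv w p) \<in> inversions n w"
      using z in_range[of "inv w p"] in_range[of "inv w q"] iv(2)[of p] iv(2)[of q]
      unfolding pq inversions_def by auto
    then show "z \<in> ?f ` inversions n w" by (rule rev_image_eqI) (simp add: pq iv)
  qed
  moreover have "inj_on ?f (inversions n w)"
    using permutes_inj[OF w] by (auto simp: inj_on_def dest: injD)
  ultimately show ?thesis unfolding inversion_number_def by (metis card_image)
qed

lemma inversion_number_comp_simple_desc:
  assumes w: "w permutes {1..n}" and i: "i \<in> {1..<n}" and desc: "w (Suc i) < w i"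
  shows "Suc (inversion_number n (w \<circ> simple i)) = inversion_number n w"
proof -
  have iw: "inv w permutes {1..n}" using permutes_inv[OF w] .
  have "inv (simple i \<circ> inv w) = w \<circ> simple i"
    using o_inv_distrib[OF simple_bij permutes_bij[OF iw]] permutes_inv_inv[OF w] by simp
  then have "inversion_number n (w \<circ> simple i) = inversion_number n (simple i \<circ> inv w)"
    using inversion_number_inv[OF permutes_compose[OF iw simple_permutes[OF i]]] by simp
  moreover have "Suc (inversion_number n (simple i \<circ> inv w)) = inversion_number n (inv w)"
    using inversion_number_simple_comp_desc[OF iw i] desc permutes_inv_inv[OF w] by simp
  ultimately show ?thesis using inversion_number_inv[OF w] by simp
qed

lemma word_prod_Nil [simp]: "word_prod [] = id"
  by (simp add: word_prod_def)

lemma word_prod_Cons [simp]: "word_prod (i # is) = simple i \<circ> word_prod is"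
  by (simp add: word_prod_def)

lemma word_prod_permutes: "set is \<subseteq> {1..<n} \<Longrightarrow> word_prod is permutes {1..n}"
proof (induction "is")
  case (Cons i "is")
  then show ?case using permutes_compose simple_permutes by (metis insert_subset list.simps(15) word_prod_Cons)
qed (simp add: permutes_id)

lemma inversion_number_word_prod_le:
  "set is \<subseteq> {1..<n} \<Longrightarrow> inversion_number n (word_prod is) \<le> length is"
proof (induction "is")
  case (Cons i "is")
  then have i: "i \<in> {1..<n}" and "is": "set is \<subseteq> {1..<n}" by auto
  have "inversion_number n (word_prod (i # is)) \<le> Suc (inversion_number n (word_prod is))"
    using inversion_number_simple_comp_le[OF word_prod_permutes[OF "is"] i] by simp
  also have "\<dots> \<le> length (i # is)" using Cons.IH "is" by simp
  finally show ?case .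
qed simp

lemma permutes_ascending_eq_id:
  assumes g: "g permutes {1..n}" and asc: "\<forall>i\<in>{1..<n}. g i < g (Suc i)"
  shows "g = id"
proof -
  have mono: "g i < g j" if "i \<in> {1..n}" "j \<in> {1..n}" "i < j" for i j
    using less_on_same_block[OF asc] that by (auto simp: same_block_def)
  have ge: "k \<le> g k" if "k \<in> {1..n}" for k
    using that
  proof (induction k)
    case (Suc k)
    then show ?case
      using mono[of k "Suc k"] permutes_in_image[OF g, of "Suc k"] by (cases "k = 0") auto
  qed simp
  have "sum g {1..n} = sum id (g ` {1..n})"
    using sum.reindex[OF permutes_inj_on[OF g], of id] by simp
  then have sum_eq: "sum g {1..n} = sum id {1..n}"
    using permutes_image[OF g] by simp
  have "g k = k" for k
  proof (cases "k \<in> {1..n}")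
    case True
    then show ?thesis
      using sum_mono_inv[OF sum_eq[symmetric], of k] ge by (simp add: order_antisym)
  qed (use permutes_not_in[OF g] in auto)
  then show ?thesis by auto
qed

lemma exists_descent:
  assumes w: "w permutes {1..n}" and "w \<noteq> id"
  shows "\<exists>i\<in>{1..<n}. inv w (Suc i) < inv w i"
proof (rule ccontr)
  assume "\<not> ?thesis"
  then have "\<forall>i\<in>{1..<n}. inv w i < inv w (Suc i)"
    using permutes_inverses[OF w] by (metis linorder_neqE_nat n_not_Suc_n)
  then have "inv w = id" using permutes_ascending_eq_id[OF permutes_inv[OF w]] by blast
  then show False using \<open>w \<noteq> id\<close> permutes_inv_inv[OF w] by (metis inv_id)
qed

lemma exists_word_of_inversion_number:
  "w permutes {1..n} \<Longrightarrow>
     \<exists>is. length is = inversion_number n w \<and> set is \<subseteq> {1..<n} \<and> word_prod is = w"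
proof (induction "inversion_number n w" arbitrary: w rule: less_induct)
  case less
  show ?case
  proof (cases "w = id")
    case True
    then show ?thesis by (intro exI[of _ "[]"]) simp
  next
    case False
    then obtain i where i: "i \<in> {1..<n}" "inv w (Suc i) < inv w i"
      using exists_descent less.prems by blast
    have perm: "simple i \<circ> w permutes {1..n}"
      using permutes_compose[OF less.prems simple_permutes[OF i(1)]] .
    have shorter: "Suc (inversion_number n (simple i \<circ> w)) = inversion_number n w"
      using inversion_number_simple_comp_desc[OF less.prems i] .
    then obtain "is" where "length is = inversion_number n (simple i \<circ> w)"
        "set is \<subseteq> {1..<n}" "word_prod is = simple i \<circ> w"
      using less.hyps[OF _ perm] by auto
    then show ?thesis using shorter i
      by (intro exI[of _ "i # is"]) (auto simp: comp_assoc[symmetric])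
  qed
qed

lemma cox_length_eq_inversion_number:
  assumes "w permutes {1..n}"
  shows "cox_length n w = inversion_number n w"
  unfolding cox_length_def
proof (rule Least_equality)
  show "\<exists>is. length is = inversion_number n w \<and> set is \<subseteq> {1..<n} \<and> word_prod is = w"
    using exists_word_of_inversion_number[OF assms] .
qed (use inversion_number_word_prod_le in blast)

section \<open>Minimal double coset representatives\<close>

definition reduced_rep :: "nat \<Rightarrow> nat set \<Rightarrow> nat set \<Rightarrow> (nat \<Rightarrow> nat) \<Rightarrow> bool" where
  "reduced_rep n K J d \<longleftrightarrow> d permutes {1..n} \<and>
     (\<forall>j\<in>J. d j < d (Suc j)) \<and> (\<forall>k\<in>K. inv d k < inv d (Suc k))"

lemma minreps_imp_reduced_rep:
  assumes J: "J \<subseteq> {1..<n}" and K: "K \<subseteq> {1..<n}" and d: "d \<in> minreps n K J"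
  shows "reduced_rep n K J d"
proof -
  have dp: "d permutes {1..n}"
    and min: "\<And>u v. u \<in> parabolic K \<Longrightarrow> v \<in> parabolic J \<Longrightarrow>
                 inversion_number n d \<le> cox_length n (u \<circ> d \<circ> v)"
    using d cox_length_eq_inversion_number by (auto simp: minreps_def)
  have "d j < d (Suc j)" if j: "j \<in> J" for j
  proof (rule ccontr)
    assume "\<not> d j < d (Suc j)"
    moreover have "d j \<noteq> d (Suc j)" using permutes_inj[OF dp] by (simp add: inj_eq)
    ultimately have desc: "d (Suc j) < d j" by simp
    have jn: "j \<in> {1..<n}" using j J by auto
    have "inversion_number n d \<le> cox_length n (d \<circ> simple j)"
      using min[OF parabolic.id simple_in_parabolic[OF j]] by simp
    also have "\<dots> = inversion_number n (d \<circ> simple j)"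
      using cox_length_eq_inversion_number[OF permutes_compose[OF simple_permutes[OF jn] dp]] .
    finally show False using inversion_number_comp_simple_desc[OF dp jn desc] by simp
  qed
  moreover have "inv d k < inv d (Suc k)" if k: "k \<in> K" for k
  proof (rule ccontr)
    assume "\<not> inv d k < inv d (Suc k)"
    moreover have "inv d k \<noteq> inv d (Suc k)"
      using permutes_inj[OF permutes_inv[OF dp]] by (simp add: inj_eq)
    ultimately have desc: "inv d (Suc k) < inv d k" by simp
    have kn: "k \<in> {1..<n}" using k K by auto
    have "inversion_number n d \<le> cox_length n (simple k \<circ> d)"
      using min[OF simple_in_parabolic[OF k] parabolic.id] by simp
    also have "\<dots> = inversion_number n (simple k \<circ> d)"
      using cox_length_eq_inversion_number[OF permutes_compose[OF dp simple_permutes[OF kn]]] .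
    finally show False using inversion_number_simple_comp_desc[OF dp kn desc] by simp
  qed
  ultimately show ?thesis using dp by (simp add: reduced_rep_def)
qed

lemma exists_minreps_in_double_coset:
  assumes J: "J \<subseteq> {1..<n}" and K: "K \<subseteq> {1..<n}" and w: "w permutes {1..n}"
  shows "\<exists>u\<in>parabolic K. \<exists>v\<in>parabolic J. u \<circ> w \<circ> v \<in> minreps n K J"
proof -
  obtain uv where uv: "fst uv \<in> parabolic K \<and> snd uv \<in> parabolic J"
    and least: "\<And>uv'. fst uv' \<in> parabolic K \<and> snd uv' \<in> parabolic J \<Longrightarrow>
       cox_length n (fst uv \<circ> w \<circ> snd uv) \<le> cox_length n (fst uv' \<circ> w \<circ> snd uv')"
    using ex_has_least_nat[of "\<lambda>uv. fst uv \<in> parabolic K \<and> snd uv \<in> parabolic J" "(id, id)"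
        "\<lambda>uv. cox_length n (fst uv \<circ> w \<circ> snd uv)"] parabolic.id by auto
  obtain u0 v0 where uv_def: "uv = (u0, v0)" by fastforce
  have u0: "u0 \<in> parabolic K" and v0: "v0 \<in> parabolic J" using uv by (auto simp: uv_def)
  have "u0 \<circ> w \<circ> v0 \<in> minreps n K J"
    unfolding minreps_def
  proof (intro CollectI conjI ballI)
    show "u0 \<circ> w \<circ> v0 permutes {1..n}"
      using permutes_compose[OF parabolic_permutes[OF v0 J]
          permutes_compose[OF w parabolic_permutes[OF u0 K]]] .
    fix u v assume u: "u \<in> parabolic K" and v: "v \<in> parabolic J"
    show "cox_length n (u0 \<circ> w \<circ> v0) \<le> cox_length n (u \<circ> (u0 \<circ> w \<circ> v0) \<circ> v)"
      using least[of "(u \<circ> u0, v0 \<circ> v)"] parabolic_comp[OF u u0] parabolic_comp[OF v0 v]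
      by (simp add: uv_def comp_assoc)
  qed
  then show ?thesis using u0 v0 by blast
qed

lemma reduced_rep_not_less_at_first_difference:
  assumes rd: "reduced_rep n K J d" and rd': "reduced_rep n K J d'"
    and u: "u \<in> parabolic K" and v: "v \<in> parabolic J" and eq: "d' = u \<circ> d \<circ> v"
    and J: "J \<subseteq> {1..<n}" and x: "x \<in> {1..n}" and agree: "\<forall>y<x. d y = d' y"
  shows "\<not> d x < d' x"
proof
  assume lt: "d x < d' x"
  have dp: "d permutes {1..n}" and dp': "d' permutes {1..n}"
    and asc': "\<forall>j\<in>J. d' j < d' (Suc j)" and inv_asc': "\<forall>k\<in>K. inv d' k < inv d' (Suc k)"
    using rd rd' by (auto simp: reduced_rep_def)
  show False
  proof (cases "same_block K (d x) (d' x)")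
    case True
    have "inv d' (d x) < inv d' (d' x)" using less_on_same_block[OF inv_asc' lt True] .
    then have left: "inv d' (d x) < x" using permutes_inverses[OF dp'] by simp
    then have "d (inv d' (d x)) = d x" using agree permutes_inverses[OF dp'] by metis
    then have "inv d' (d x) = x" using permutes_inj[OF dp] by (simp add: inj_eq)
    with left show False by simp
  next
    case False
    text \<open>Count the \<open>y\<close> in the \<open>J\<close>-block of \<open>x\<close> that are sent into the \<open>K\<close>-block of
      \<open>d x\<close>. The count is the same for \<open>d\<close> and \<open>d' = u d v\<close>; but for \<open>d'\<close> all such \<open>y\<close> lie
      left of \<open>x\<close>, where \<open>d'\<close> agrees with \<open>d\<close>, while for \<open>d\<close> also \<open>x\<close> itself is counted.\<close>
    define count where
      "count f = card {y \<in> {1..n}. same_block J x y \<and> same_block K (d x) (f y)}" for f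
    have "count d' = count d"
      using card_block_double_coset_invariant[OF u v J] by (simp add: count_def eq)
    moreover have "count d' \<le> card {y \<in> {1..n}. same_block J x y \<and> y < x \<and> same_block K (d x) (d y)}"
    proof (unfold count_def, rule card_mono, simp, intro subsetI CollectI conjI)
      fix y assume y: "y \<in> {y \<in> {1..n}. same_block J x y \<and> same_block K (d x) (d' y)}"
      then have "d' y < d' x" using less_if_not_same_block[OF False lt] by simp
      moreover have "\<not> x < y" using y less_on_same_block[OF asc', of x y] \<open>d' y < d' x\<close> by auto
      ultimately have "y < x" by (cases "x = y") auto
      then show "y < x" "y \<in> {1..n}" "same_block J x y" "same_block K (d x) (d y)"
        using y agree by auto
    qed
    moreover have "card {y \<in> {1..n}. same_block J x y \<and> y < x \<and> same_block K (d x) (d y)} < count d"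
    proof (unfold count_def, rule psubset_card_mono)
      have "x \<in> {y \<in> {1..n}. same_block J x y \<and> same_block K (d x) (d y)}" using x by simp
      then show "{y \<in> {1..n}. same_block J x y \<and> y < x \<and> same_block K (d x) (d y)}
          \<subset> {y \<in> {1..n}. same_block J x y \<and> same_block K (d x) (d y)}" by blast
    qed simp
    ultimately show False by simp
  qed
qed

lemma reduced_rep_unique:
  assumes rd: "reduced_rep n K J d" and rd': "reduced_rep n K J d'"
    and u: "u \<in> parabolic K" and v: "v \<in> parabolic J" and eq: "d' = u \<circ> d \<circ> v"
    and J: "J \<subseteq> {1..<n}"
  shows "d' = d"
proof -
  have dp: "d permutes {1..n}" and dp': "d' permutes {1..n}"
    using rd rd' by (auto simp: reduced_rep_def)
  have eq': "d = inv u \<circ> d' \<circ> inv v"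
    using bij_is_inj[OF parabolic_bij[OF u]] bij_is_surj[OF parabolic_bij[OF v]]
    by (simp add: eq fun_eq_iff surj_f_inv_f)
  have "d x = d' x" for x
  proof (induction x rule: less_induct)
    case (less x)
    show ?case
    proof (cases "x \<in> {1..n}")
      case True
      then show ?thesis
        using reduced_rep_not_less_at_first_difference[OF rd rd' u v eq J True]
          reduced_rep_not_less_at_first_difference[OF rd' rd parabolic_inv[OF u] parabolic_inv[OF v] eq' J True]
          less by (metis linorder_neqE)
    qed (simp add: permutes_not_in[OF dp] permutes_not_in[OF dp'])
  qed
  then show ?thesis by auto
qed

lemma conj_inter_subset: "conj_inter d K J \<subseteq> J"
  by (auto simp: conj_inter_def)

lemma conj_simple_eq_transpose:
  assumes "bij d"
  shows "d \<circ> simple k \<circ> inv d = transpose (d k) (d (Suc k))"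
proof -
  have "transpose (d k) (d (Suc k)) \<circ> d = d \<circ> simple k"
    using transpose_comp_eq[OF assms] inv_f_f[OF bij_is_inj[OF assms]] by (simp add: simple_def)
  then show ?thesis
    using surj_iff[THEN iffD1, OF bij_is_surj[OF assms]] by (metis comp_assoc comp_id)
qed

lemma conj_parabolic_conj_inter:
  assumes d: "bij d" and v: "v \<in> parabolic (conj_inter d K J)"
  shows "d \<circ> v \<circ> inv d \<in> parabolic K"
  using v
proof (induction rule: parabolic.induct)
  case id
  show ?case using surj_iff[THEN iffD1, OF bij_is_surj[OF d]] parabolic.id by (simp only: comp_id)
next
  case (step j v)
  then obtain k where k: "k \<in> K" "d \<circ> simple j \<circ> inv d = simple k"
    by (auto simp: conj_inter_def)
  have "d \<circ> (simple j \<circ> v) \<circ> inv d = (d \<circ> simple j \<circ> inv d) \<circ> (d \<circ> v \<circ> inv d)"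
    by (simp add: fun_eq_iff inv_f_f[OF bij_is_inj[OF d]])
  also have "\<dots> = simple k \<circ> (d \<circ> v \<circ> inv d)" using k(2) by (simp only:)
  finally show ?case using parabolic.step[OF k(1) step.IH] by (simp only:)
qed

lemma same_block_conj_inter_le:
  assumes rd: "reduced_rep n K J d" and ab: "a \<le> b"
    and blockJ: "same_block J a b" and blockK: "same_block K (d a) (d b)"
  shows "same_block (conj_inter d K J) a b"
  unfolding same_block_def
proof
  fix k assume "k \<in> {min a b..<max a b}"
  then have k: "a \<le> k" "k < b" using ab by auto
  have dp: "d permutes {1..n}" and asc: "\<forall>j\<in>J. d j < d (Suc j)"
    and inv_asc: "\<forall>k\<in>K. inv d k < inv d (Suc k)" using rd by (auto simp: reduced_rep_def)
  have kJ: "k \<in> J" using blockJ k by (auto simp: same_block_def)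
  have mono: "d p \<le> d q" if "a \<le> p" "p \<le> q" "q \<le> b" for p q
  proof (cases "p = q")
    case False
    have "same_block J p q" using blockJ that by (auto simp: same_block_def)
    then show ?thesis using less_on_same_block[OF asc, of p q] that False by simp
  qed simp
  have dk: "d a \<le> d k" "d k < d (Suc k)" "d (Suc k) \<le> d b"
    using mono k asc kJ by auto
  have inK: "same_block K (d a) m" if "d a \<le> m" "m \<le> d b" for m
    using same_block_between[OF blockK] that by simp
  text \<open>\<open>d\<close> maps \<open>k, k+1\<close> to adjacent values, since \<open>inv d\<close> ascends along the \<open>K\<close>-block
    containing them.\<close>
  have succ: "d (Suc k) = Suc (d k)"
  proof (rule ccontr)
    assume "d (Suc k) \<noteq> Suc (d k)"
    then have gap: "Suc (d k) < d (Suc k)" using dk by simp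
    have "same_block K (d a) (d k)" "same_block K (d a) (Suc (d k))"
      "same_block K (d a) (d (Suc k))"
      using inK dk gap by simp_all
    then have "same_block K (d k) (Suc (d k))" "same_block K (Suc (d k)) (d (Suc k))"
      using same_block_trans same_block_sym by meson+
    then have "inv d (d k) < inv d (Suc (d k))" "inv d (Suc (d k)) < inv d (d (Suc k))"
      using less_on_same_block[OF inv_asc] gap by auto
    then show False using permutes_inverses[OF dp] by simp
  qed
  have "d k \<in> K" using blockK dk by (auto simp: same_block_def)
  moreover have "d \<circ> simple k \<circ> inv d = simple (d k)"
    using conj_simple_eq_transpose[OF permutes_bij[OF dp]] succ by (simp add: simple_def)
  ultimately show "k \<in> conj_inter d K J" using kJ by (auto simp: conj_inter_def)
qed

lemma reduced_rep_stabilizer_in_conj_inter_block: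
  assumes rd: "reduced_rep n K J d" and u: "u \<in> parabolic K" and v: "v \<in> parabolic J"
    and fix_d: "u \<circ> d \<circ> v = d"
  shows "same_block (conj_inter d K J) y (v y)"
proof -
  have blockJ: "same_block J y (v y)" using same_block_parabolic[OF v] .
  have "same_block K (d (v y)) (d y)"
    using same_block_parabolic[OF u, of "d (v y)"] fix_d by (metis comp_apply)
  then have blockK: "same_block K (d y) (d (v y))" by (rule same_block_sym)
  show ?thesis
  proof (cases "y \<le> v y")
    case True
    then show ?thesis using same_block_conj_inter_le[OF rd True blockJ blockK] by simp
  next
    case False
    then show ?thesis
      using same_block_conj_inter_le[OF rd _ same_block_sym[OF blockJ] same_block_sym[OF blockK]]
        same_block_sym by simp
  qed
qed

section \<open>Dominant exponent vectors\<close>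

lemma dominant_iff_same_block:
  "p \<in> dominant n L \<longleftrightarrow> p \<in> expvecs n \<and>
     (\<forall>i\<in>{1..n}. \<forall>j\<in>{1..n}. i \<le> j \<and> same_block L i j \<longrightarrow> p j \<le> p i)"
  unfolding dominant_def same_orbit_iff_same_block by auto

lemma antidominant_iff_uminus_dominant: "p \<in> antidominant n L \<longleftrightarrow> (\<lambda>i. - p i) \<in> dominant n L"
  by (auto simp: antidominant_def dominant_def expvecs_def)

definition position_weight :: "nat \<Rightarrow> (nat \<Rightarrow> int) \<Rightarrow> int" where
  "position_weight n q = (\<Sum>i\<in>{1..n}. int i * q i)"

lemma position_weight_comp_simple:
  assumes k: "k \<in> {1..<n}"
  shows "position_weight n (q \<circ> simple k) = position_weight n q + q k - q (Suc k)"
proof -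
  let ?g = "\<lambda>i. int i * q (simple k i) - int i * q i"
  have "position_weight n (q \<circ> simple k) - position_weight n q = (\<Sum>i\<in>{1..n}. ?g i)"
    by (simp add: position_weight_def sum_subtractf)
  also have "\<dots> = (\<Sum>i\<in>{k, Suc k}. ?g i)"
    using k by (intro sum.mono_neutral_right) (auto simp: simple_def)
  also have "\<dots> = q k - q (Suc k)"
    by (simp add: simple_def algebra_simps)
  finally show ?thesis by simp
qed

text \<open>Sorting by \<open>W\<^sub>L\<close>: a minimiser of the position weight over the \<open>W\<^sub>L\<close>-orbit has no ascent
  inside an \<open>L\<close>-block, since swapping an ascent would lower the weight.\<close>

lemma exists_parabolic_comp_dominant:
  assumes L: "L \<subseteq> {1..<n}" and p: "p \<in> expvecs n"
  shows "\<exists>v\<in>parabolic L. p \<circ> v \<in> dominant n L"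
proof -
  let ?weight = "\<lambda>v. position_weight n (p \<circ> v)"
  have "finite (parabolic L)"
    using finite_permutations[of "{1..n}"] parabolic_permutes[OF _ L]
    by (metis finite_atLeastAtMost finite_subset mem_Collect_eq subsetI)
  moreover have "parabolic L \<noteq> {}" using parabolic.id by blast
  ultimately obtain v where v: "v \<in> parabolic L"
    and min: "\<And>v'. v' \<in> parabolic L \<Longrightarrow> ?weight v \<le> ?weight v'"
    using arg_min_if_finite[of "parabolic L" ?weight] by (metis not_le)
  have desc: "\<forall>k\<in>L. (p \<circ> v) (Suc k) \<le> (p \<circ> v) k"
  proof
    fix k assume kL: "k \<in> L"
    have "?weight v \<le> ?weight (v \<circ> simple k)"
      using min parabolic_comp[OF v simple_in_parabolic[OF kL]] by blast
    also have "\<dots> = ?weight v + (p \<circ> v) k - (p \<circ> v) (Suc k)"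
      using position_weight_comp_simple[of k n "p \<circ> v"] kL L by (auto simp: comp_assoc)
    finally show "(p \<circ> v) (Suc k) \<le> (p \<circ> v) k" by simp
  qed
  have "p \<circ> v \<in> expvecs n"
    using p permutes_not_in[OF parabolic_permutes[OF v L]] by (simp add: expvecs_def)
  then have "p \<circ> v \<in> dominant n L"
    using le_on_same_block[OF desc] by (auto simp: dominant_iff_same_block)
  then show ?thesis using v by blast
qed

lemma dominant_comp_not_less:
  assumes v: "v permutes {1..n}" and block: "\<forall>y. same_block L y (v y)"
    and p: "p \<in> dominant n L" and pv: "p \<circ> v \<in> dominant n L" and x: "x \<in> {1..n}"
  shows "\<not> p (v x) < p x"
proof
  assume lt: "p (v x) < p x"
  text \<open>Count the positions in the \<open>L\<close>-block of \<open>x\<close> carrying a value \<open>\<ge> p x\<close>. For \<open>p\<close> these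
    include all positions \<open>\<le> x\<close>; for its rearrangement \<open>p \<circ> v\<close>, which has the same count, they
    all lie strictly before \<open>x\<close>.\<close>
  define count where "count f = card {y \<in> {1..n}. same_block L x y \<and> p x \<le> f y}" for f
  have dom_p: "p j \<le> p i" and dom_pv: "p (v j) \<le> p (v i)"
    if "i \<in> {1..n}" "j \<in> {1..n}" "i \<le> j" "same_block L i j" for i j
    using p pv that by (auto simp: dominant_iff_same_block)
  have "count (p \<circ> v) = count p"
    using card_block_comp_permutation[OF v block, of x "\<lambda>m. p x \<le> p m"] by (simp add: count_def)
  moreover have "count (p \<circ> v) \<le> card {y \<in> {1..n}. same_block L x y \<and> y < x}"
    unfolding count_def
  proof (rule card_mono, simp, intro subsetI)
    fix y assume y: "y \<in> {y \<in> {1..n}. same_block L x y \<and> p x \<le> (p \<circ> v) y}"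
    have "\<not> x \<le> y" using dom_pv[OF x, of y] y lt by auto
    then show "y \<in> {y \<in> {1..n}. same_block L x y \<and> y < x}" using y by simp
  qed
  moreover have "card {y \<in> {1..n}. same_block L x y \<and> y < x} < card {y \<in> {1..n}. same_block L x y \<and> y \<le> x}"
  proof (rule psubset_card_mono)
    have "{y \<in> {1..n}. same_block L x y \<and> y < x} \<subseteq> {y \<in> {1..n}. same_block L x y \<and> y \<le> x}"
      by auto
    moreover have "x \<in> {y \<in> {1..n}. same_block L x y \<and> y \<le> x}" using x by simp
    ultimately show "{y \<in> {1..n}. same_block L x y \<and> y < x} \<subset> {y \<in> {1..n}. same_block L x y \<and> y \<le> x}"
      by blast
  qed simp
  moreover have "card {y \<in> {1..n}. same_block L x y \<and> y \<le> x} \<le> count p"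
    unfolding count_def
    using dom_p[of _ x] x same_block_sym by (intro card_mono) auto
  ultimately show False by simp
qed

lemma dominant_comp_eq:
  assumes v: "v permutes {1..n}" and block: "\<forall>y. same_block L y (v y)"
    and p: "p \<in> dominant n L" and pv: "p \<circ> v \<in> dominant n L"
  shows "p \<circ> v = p"
proof
  fix x
  show "(p \<circ> v) x = p x"
  proof (cases "x \<in> {1..n}")
    case True
    have iv: "inv v permutes {1..n}" using permutes_inv[OF v] .
    have block': "\<forall>y. same_block L y (inv v y)"
      using block permutes_inverses[OF v] same_block_sym by metis
    have "(p \<circ> v) \<circ> inv v = p" using permutes_inv_o[OF v] by (simp add: comp_assoc)
    then have "\<not> p x < (p \<circ> v) x"
      using dominant_comp_not_less[OF iv block' pv _ True] p permutes_inverses[OF v] by simp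
    then show ?thesis using dominant_comp_not_less[OF v block p pv True] by simp
  qed (simp add: permutes_not_in[OF v])
qed

section \<open>Double cosets in the extended affine Weyl group\<close>

lemma dcoset_equiv_iff:
  "dcoset_equiv K J (w, a) y \<longleftrightarrow> (\<exists>u\<in>parabolic K. \<exists>v\<in>parabolic J. y = (u \<circ> w \<circ> v, a \<circ> v))"
  by (simp add: dcoset_equiv_def Wmult_def comp_def)

lemma Delta_eq: "Delta n K J = {(d, p). d \<in> minreps n K J \<and> p \<in> dominant n (conj_inter d K J)}"
  by (auto simp: Delta_def Wmult_def)

lemma Nabla_eq: "Nabla n K J = {(d, p). d \<in> minreps n K J \<and> p \<in> antidominant n (conj_inter d K J)}"
  by (auto simp: Nabla_def Wmult_def)

lemma Delta_subset_Wext: "Delta n K J \<subseteq> Wext n"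
  by (auto simp: Delta_eq Wext_def minreps_def dominant_def)

lemma Delta_meets_double_coset:
  assumes J: "J \<subseteq> {1..<n}" and K: "K \<subseteq> {1..<n}" and x: "x \<in> Wext n"
  shows "\<exists>r\<in>Delta n K J. dcoset_equiv K J x r"
proof -
  obtain w a where xw: "x = (w, a)" and w: "w permutes {1..n}" and a: "a \<in> expvecs n"
    using x by (auto simp: Wext_def)
  obtain u0 v0 where u0: "u0 \<in> parabolic K" and v0: "v0 \<in> parabolic J"
    and d: "u0 \<circ> w \<circ> v0 \<in> minreps n K J"
    using exists_minreps_in_double_coset[OF J K w] by blast
  define d where "d = u0 \<circ> w \<circ> v0"
  define L where "L = conj_inter d K J"
  have dp: "d permutes {1..n}" using d by (simp add: d_def minreps_def)
  have L: "L \<subseteq> {1..<n}" using conj_inter_subset[of d K J] J unfolding L_def by (rule order_trans)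
  have "a \<circ> v0 \<in> expvecs n"
    using a permutes_not_in[OF parabolic_permutes[OF v0 J]] by (simp add: expvecs_def)
  then obtain v1 where v1: "v1 \<in> parabolic L" and dom: "a \<circ> v0 \<circ> v1 \<in> dominant n L"
    using exists_parabolic_comp_dominant[OF L] by blast
  text \<open>Move \<open>v1\<close> across \<open>d\<close> to the left, where it becomes an element of \<open>W\<^sub>K\<close>.\<close>
  define u where "u = d \<circ> inv v1 \<circ> inv d \<circ> u0"
  define v where "v = v0 \<circ> v1"
  have u: "u \<in> parabolic K"
    using parabolic_comp[OF conj_parabolic_conj_inter[OF permutes_bij[OF dp]
          parabolic_inv[OF v1[unfolded L_def]]] u0]
    by (simp add: u_def)
  have v: "v \<in> parabolic J"
    using parabolic_comp[OF v0 parabolic_mono[OF v1 conj_inter_subset[of d K J, folded L_def]]]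
    by (simp add: v_def)
  have "u \<circ> w \<circ> v = d \<circ> inv v1 \<circ> (inv d \<circ> d) \<circ> v1"
    by (simp add: u_def v_def d_def comp_assoc)
  also have "\<dots> = d"
    using permutes_inv_o(2)[OF dp] inv_o_cancel[OF bij_is_inj[OF parabolic_bij[OF v1]]]
    by (simp add: comp_assoc)
  finally have "dcoset_equiv K J x (d, a \<circ> v0 \<circ> v1)"
    using u v by (auto simp: xw dcoset_equiv_iff v_def comp_assoc)
  moreover have "(d, a \<circ> v0 \<circ> v1) \<in> Delta n K J"
    using d dom by (simp add: Delta_eq d_def L_def)
  ultimately show ?thesis by blast
qed

lemma Delta_inequivalent:
  assumes J: "J \<subseteq> {1..<n}" and K: "K \<subseteq> {1..<n}"
    and r: "r \<in> Delta n K J" and r': "r' \<in> Delta n K J" and equiv: "dcoset_equiv K J r r'"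
  shows "r = r'"
proof -
  obtain d p where rd: "r = (d, p)" and d: "d \<in> minreps n K J"
    and p: "p \<in> dominant n (conj_inter d K J)"
    using r by (auto simp: Delta_eq)
  obtain d' p' where rd': "r' = (d', p')" and d': "d' \<in> minreps n K J"
    and p': "p' \<in> dominant n (conj_inter d' K J)"
    using r' by (auto simp: Delta_eq)
  obtain u v where u: "u \<in> parabolic K" and v: "v \<in> parabolic J"
    and eq: "d' = u \<circ> d \<circ> v" and peq: "p' = p \<circ> v"
    using equiv by (auto simp: rd rd' dcoset_equiv_iff)
  have red: "reduced_rep n K J d" and red': "reduced_rep n K J d'"
    using minreps_imp_reduced_rep[OF J K] d d' by auto
  have dd: "d' = d" using reduced_rep_unique[OF red red' u v eq J] .
  have "\<forall>y. same_block (conj_inter d K J) y (v y)"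
    using reduced_rep_stabilizer_in_conj_inter_block[OF red u v] eq dd by simp
  then have "p \<circ> v = p"
    using dominant_comp_eq[OF parabolic_permutes[OF v J] _ p] p' peq dd by simp
  then show "r = r'" using rd rd' dd peq by simp
qed

lemma complete_reps_Delta:
  assumes "J \<subseteq> {1..<n}" and "K \<subseteq> {1..<n}"
  shows "complete_reps n K J (Delta n K J)"
  using Delta_subset_Wext Delta_meets_double_coset[OF assms] Delta_inequivalent[OF assms]
  by (auto simp: complete_reps_def)

definition neg_exponents :: "(nat \<Rightarrow> nat) \<times> (nat \<Rightarrow> int) \<Rightarrow> (nat \<Rightarrow> nat) \<times> (nat \<Rightarrow> int)" where
  "neg_exponents x = (fst x, \<lambda>i. - snd x i)"

lemma neg_exponents_neg_exponents [simp]: "neg_exponents (neg_exponents x) = x"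
  by (simp add: neg_exponents_def)

lemma neg_exponents_in_Wext: "x \<in> Wext n \<Longrightarrow> neg_exponents x \<in> Wext n"
  by (auto simp: Wext_def neg_exponents_def expvecs_def)

lemma dcoset_equiv_neg_exponents:
  assumes "dcoset_equiv K J x y"
  shows "dcoset_equiv K J (neg_exponents x) (neg_exponents y)"
proof -
  obtain w a where x: "x = (w, a)" by fastforce
  then obtain u v where u: "u \<in> parabolic K" and v: "v \<in> parabolic J"
    and y: "y = (u \<circ> w \<circ> v, a \<circ> v)"
    using assms by (auto simp: dcoset_equiv_iff)
  show ?thesis
    unfolding x y neg_exponents_def dcoset_equiv_iff
    by (rule bexI[OF bexI[OF _ v] u]) (simp add: comp_def)
qed

lemma complete_reps_image_neg_exponents:
  assumes "complete_reps n K J R"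
  shows "complete_reps n K J (neg_exponents ` R)"
  unfolding complete_reps_def
proof (intro conjI ballI impI)
  show "neg_exponents ` R \<subseteq> Wext n"
    using assms neg_exponents_in_Wext by (auto simp: complete_reps_def)
next
  fix x assume "x \<in> Wext n"
  then have "neg_exponents x \<in> Wext n" by (rule neg_exponents_in_Wext)
  then obtain r where "r \<in> R" "dcoset_equiv K J (neg_exponents x) r"
    using assms unfolding complete_reps_def by blast
  then show "\<exists>r\<in>neg_exponents ` R. dcoset_equiv K J x r"
    using dcoset_equiv_neg_exponents by fastforce
next
  fix r r' assume "r \<in> neg_exponents ` R" "r' \<in> neg_exponents ` R" and equiv: "dcoset_equiv K J r r'"
  then obtain s s' where s: "s \<in> R" "r = neg_exponents s" and s': "s' \<in> R" "r' = neg_exponents s'"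
    by blast
  have "dcoset_equiv K J s s'" using dcoset_equiv_neg_exponents[OF equiv] s s' by simp
  then show "r = r'" using assms s s' unfolding complete_reps_def by blast
qed

lemma Nabla_eq_image_neg_exponents: "Nabla n K J = neg_exponents ` Delta n K J"
proof (intro equalityI subsetI)
  fix z assume "z \<in> Nabla n K J"
  then have "neg_exponents z \<in> Delta n K J"
    by (auto simp: Nabla_eq Delta_eq neg_exponents_def antidominant_iff_uminus_dominant)
  then show "z \<in> neg_exponents ` Delta n K J"
    using neg_exponents_neg_exponents by (metis image_eqI)
next
  fix z assume "z \<in> neg_exponents ` Delta n K J"
  then show "z \<in> Nabla n K J"
    by (auto simp: Nabla_eq Delta_eq neg_exponents_def antidominant_iff_uminus_dominant)
qed

theorem proposition2p3:
  fixes n :: nat and J K :: "nat set"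
  assumes "n \<ge> 2" and "J \<subseteq> {1..<n}" and "K \<subseteq> {1..<n}"
  shows "complete_reps n K J (Delta n K J) \<and> complete_reps n K J (Nabla n K J)"
  using complete_reps_Delta[OF assms(2,3)]
    complete_reps_image_neg_exponents[OF complete_reps_Delta[OF assms(2,3)]]
  by (simp add: Nabla_eq_image_neg_exponents)

end
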